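(* Let $\beta\in(0,1/2)$, $N=2^n$, $\delta_N=2^{-N^\beta}$. Let $(V,X,Z)$ be random variables with $V\in\{0,1\}$ and $X,Z$ taking values in finite alphabets $\mathcal X,\mathcal Z$, and let $P=P_{V^NX^NZ^N}$ be the distribution of $N$ i.i.d. copies of $(V,X,Z)$. Put $T^N=V^NG_N$ and $$\mathcal H_{V|Z}=\{i\in[N]:\ Z(T_i\mid T^{i-1},Z^N)\ge 1-\delta_N\},$$ the Bhattacharyya parameters being computed under $P$. Let $Q=Q_{V^NX^NZ^N}$ be any distribution on $\{0,1\}^N\times\mathcal X^N\times\mathcal Z^N$ with $\|P-Q\|_1\le N2^{-N^\beta}$, and under $Q$ again set $T^N=V^NG_N$. Let $\mathcal I\subseteq\mathcal H_{V|Z}$ and $\mathcal A\subseteq\mathcal I$, and write $T[\mathcal S]=(T_i)_{i\in\mathcal S}$. Then, with mutual information computed under $Q$, $$I\big(T[\mathcal I\setminus\mathcal A];\,T[\mathcal A],Z^N\big)=O\big(N^3 2^{-N^\beta}\big),$$ where the implied constant depends only on $|\mathcal Z|$ (and the bound holds for all sufficiently large $N$).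
   Context: $G_N=B_NF^{\otimes n}$ is Arıkan's polarizing matrix over $\mathbb F_2$: $F=\begin{pmatrix}1&0\\1&1\end{pmatrix}$, $\otimes$ is the Kronecker product and $B_N$ is the bit-reversal permutation matrix; $V^NG_N$ is computed over $\mathbb F_2$. For a binary random variable $A$ and a discrete random variable $B$, the Bhattacharyya parameter is $Z(A\mid B)=2\sum_b P_B(b)\sqrt{P_{A|B}(0|b)P_{A|B}(1|b)}$. $T^{i-1}=(T_1,\dots,T_{i-1})$, $[N]=\{1,\dots,N\}$, $\|\cdot\|_1$ is the $\ell_1$ distance between distributions, and logarithms are base 2. *)

theory Defs
  imports "HOL-Probability.Probability"
begin

section \<open>Arikan's polarizing matrix G_N = B_N F^{(tensor n)} over F_2 (0-based indices)\<close>

text \<open>The kernel F = ((1,0),(1,1)); entries as booleans (True = 1 in F_2).\<close>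
definition arikanF :: "nat \<Rightarrow> nat \<Rightarrow> bool" where
  "arikanF a b = ((a = 0 \<and> b = 0) \<or> (a = 1 \<and> b = 0) \<or> (a = 1 \<and> b = 1))"

text \<open>Kronecker power: F^(tensor (n+1)) = F tensor F^(tensor n), entries indexed by 0..2^n-1.\<close>
fun kronF :: "nat \<Rightarrow> nat \<Rightarrow> nat \<Rightarrow> bool" where
  "kronF 0 i j = (i = 0 \<and> j = 0)"
| "kronF (Suc n) i j = (arikanF (i div 2^n) (j div 2^n) \<and> kronF n (i mod 2^n) (j mod 2^n))"

definition bitrev :: "nat \<Rightarrow> nat \<Rightarrow> nat" where
  "bitrev n i = (\<Sum>k<n. if bit i k then 2^(n - 1 - k) else 0)"

text \<open>B_N is the permutation matrix with (B_N)_{i,bitrev i} = 1, so (B_N M)_{ij} = M_{bitrev i, j}.\<close>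
definition arikanG :: "nat \<Rightarrow> nat \<Rightarrow> nat \<Rightarrow> bool" where
  "arikanG n i j = kronF n (bitrev n i) j"

text \<open>Row vector times G_N over F_2: (v G_N)_j = sum_i v_i (G_N)_{ij} mod 2.\<close>
definition polar :: "nat \<Rightarrow> bool list \<Rightarrow> bool list" where
  "polar n v = map (\<lambda>j. odd (card {i. i < 2^n \<and> v ! i \<and> arikanG n i j})) [0..<2^n]"

definition bhatt :: "'w pmf \<Rightarrow> ('w \<Rightarrow> bool) \<Rightarrow> ('w \<Rightarrow> 'b) \<Rightarrow> real" where
  "bhatt M A B = 2 * (\<Sum>b\<in>set_pmf (map_pmf B M).
      pmf (map_pmf B M) b *
      sqrt ((pmf (map_pmf (\<lambda>w. (A w, B w)) M) (False, b) / pmf (map_pmf B M) b) *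
            (pmf (map_pmf (\<lambda>w. (A w, B w)) M) (True, b) / pmf (map_pmf B M) b)))"

definition mutinf :: "'w pmf \<Rightarrow> ('w \<Rightarrow> 'a) \<Rightarrow> ('w \<Rightarrow> 'b) \<Rightarrow> real" where
  "mutinf M A B = (\<Sum>(a, b)\<in>set_pmf (map_pmf (\<lambda>w. (A w, B w)) M).
      pmf (map_pmf (\<lambda>w. (A w, B w)) M) (a, b) *
      log 2 (pmf (map_pmf (\<lambda>w. (A w, B w)) M) (a, b) /
             (pmf (map_pmf A M) a * pmf (map_pmf B M) b)))"

definition l1dist :: "'w pmf \<Rightarrow> 'w pmf \<Rightarrow> real" where
  "l1dist P Q = (\<Sum>w\<in>set_pmf P \<union> set_pmf Q. \<bar>pmf P w - pmf Q w\<bar>)"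

definition iid :: "nat \<Rightarrow> (bool \<times> 'x \<times> 'z) pmf \<Rightarrow> (bool list \<times> 'x list \<times> 'z list) pmf" where
  "iid N p = map_pmf (\<lambda>ws. (map fst ws, map (fst \<circ> snd) ws, map (snd \<circ> snd) ws)) (replicate_pmf N p)"

definition space :: "nat \<Rightarrow> 'x set \<Rightarrow> (bool list \<times> 'x list \<times> 'z list) set" where
  "space N Xs = {(v, x, z). length v = N \<and> length x = N \<and> set x \<subseteq> Xs \<and> length z = N}"

definition Tvec :: "nat \<Rightarrow> bool list \<times> 'x list \<times> 'z list \<Rightarrow> bool list" where
  "Tvec n w = polar n (fst w)"

text \<open>T[S] = (T_i)_{i in S}, with 1-based indices i in [N].\<close>
definition Tsub :: "nat \<Rightarrow> nat set \<Rightarrow> bool list \<times> 'x list \<times> 'z list \<Rightarrow> (nat \<Rightarrow> bool)" where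
  "Tsub n S w = restrict (\<lambda>i. Tvec n w ! (i - 1)) S"

definition Hset :: "nat \<Rightarrow> real \<Rightarrow> (bool list \<times> 'x list \<times> 'z list) pmf \<Rightarrow> nat set" where
  "Hset n \<delta> P = {i \<in> {1..2^n}.
      bhatt P (\<lambda>w. Tvec n w ! (i - 1)) (\<lambda>w. (take (i - 1) (Tvec n w), snd (snd w))) \<ge> 1 - \<delta>}"

end

theory Submission
  imports Defs "HOL-Real_Asymp.Real_Asymp"
begin

text \<open>For a binary \<open>B\<close> one has \<open>H(B | Y) \<ge> 1 - 3 (1 - Z(B | Y))\<close>;
  with the chain rule, and since conditioning on the whole prefix \<open>T\<^sup>i\<^sup>-\<^sup>1\<close> rather than on
  \<open>T[I \<inter> [i - 1]]\<close> can only lower the entropy, this gives \<open>H\<^sub>P(T[I] | Z\<^sup>N) \<ge> |I| (1 - 3\<delta>)\<close>.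
  Entropy is continuous in the l1 distance: a variable with at most \<open>K\<close> values changes its entropy
  by \<open>O(\<epsilon> log (K / \<epsilon>))\<close> when the law moves by \<open>\<epsilon>\<close>.  Here \<open>K = (2 |Z|)\<^sup>N\<close> and \<open>\<epsilon> = N \<delta>\<close>,
  so the same lower bound holds under \<open>Q\<close> up to \<open>O(N\<^sup>2 \<delta>)\<close>.  Finally, under \<open>Q\<close>,
  \<open>I(T[I - A]; T[A], Z\<^sup>N) = H(T[I - A]) + H(T[A] | Z\<^sup>N) - H(T[I] | Z\<^sup>N) \<le> |I| - H\<^sub>Q(T[I] | Z\<^sup>N)\<close>,
  which is therefore \<open>O(N\<^sup>3 \<delta>)\<close>.\<close>

section \<open>Entropy of random variables on a finitely supported distribution\<close>

text \<open>Restricting to the finite support turns every random variable into a simple function, as the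
  entropy lemmas of \<open>HOL-Probability\<close> require.\<close>
definition pmf_support_measure :: "'w pmf \<Rightarrow> 'w measure" where
  "pmf_support_measure P = restrict_space (measure_pmf P) (set_pmf P)"

lemma space_pmf_support_measure [simp]: "Sigma_Algebra.space (pmf_support_measure P) = set_pmf P"
  by (simp add: pmf_support_measure_def space_restrict_space)

lemma sets_pmf_support_measure [simp]: "sets (pmf_support_measure P) = Pow (set_pmf P)"
  by (auto simp: pmf_support_measure_def sets_restrict_space)

lemma information_space_pmf_support_measure: "information_space (pmf_support_measure P) 2"
proof -
  have "prob_space (pmf_support_measure P)" unfolding pmf_support_measure_def
    by (intro prob_space_restrict_space measure_pmf.emeasure_eq_1_AE) (auto simp: AE_measure_pmf_iff)
  then show ?thesis by (simp add: information_space_def information_space_axioms_def)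
qed

lemma simple_distributed_pmf_support_measure:
  assumes "finite (set_pmf P)"
  shows "simple_distributed (pmf_support_measure P) F (pmf (map_pmf F P))"
proof -
  interpret information_space "pmf_support_measure P" 2
    by (rule information_space_pmf_support_measure)
  have "pmf (map_pmf F P) x = measure (pmf_support_measure P) (F -` {x} \<inter> set_pmf P)" for x
    by (simp add: pmf_map measure_Int_set_pmf pmf_support_measure_def measure_restrict_space)
  then show ?thesis
    using assms by (intro simple_distributedI) (auto simp: simple_function_def)
qed

definition entropy_pmf :: "'w pmf \<Rightarrow> ('w \<Rightarrow> 'a) \<Rightarrow> real" where
  "entropy_pmf P F = - (\<Sum>x\<in>set_pmf (map_pmf F P). pmf (map_pmf F P) x * log 2 (pmf (map_pmf F P) x))"

definition cond_entropy_pmf :: "'w pmf \<Rightarrow> ('w \<Rightarrow> 'a) \<Rightarrow> ('w \<Rightarrow> 'b) \<Rightarrow> real" where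
  "cond_entropy_pmf P A B = entropy_pmf P (\<lambda>w. (A w, B w)) - entropy_pmf P B"

lemma entropy_pmf_eq_entropy:
  assumes "finite (set_pmf P)"
  shows "entropy_pmf P F =
    prob_space.entropy (pmf_support_measure P) 2 (count_space (F ` set_pmf P)) F"
proof -
  interpret information_space "pmf_support_measure P" 2
    by (rule information_space_pmf_support_measure)
  show ?thesis
    using entropy_simple_distributed[OF simple_distributed_pmf_support_measure[OF assms, of F]]
    by (simp add: entropy_pmf_def)
qed

lemma mutinf_eq_mutual_information:
  assumes "finite (set_pmf P)"
  shows "mutinf P A B = prob_space.mutual_information (pmf_support_measure P) 2
    (count_space (A ` set_pmf P)) (count_space (B ` set_pmf P)) A B"
proof -
  interpret information_space "pmf_support_measure P" 2
    by (rule information_space_pmf_support_measure)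
  show ?thesis
    using mutual_information_simple_distributed[OF simple_distributed_pmf_support_measure[OF assms]
        simple_distributed_pmf_support_measure[OF assms]
        simple_distributed_pmf_support_measure[OF assms, of "\<lambda>w. (A w, B w)"]]
    by (simp add: mutinf_def)
qed

lemma sum_set_map_pmf:
  assumes "finite (set_pmf P)"
  shows "(\<Sum>u\<in>set_pmf (map_pmf F P). pmf (map_pmf F P) u * g u) = (\<Sum>w\<in>set_pmf P. pmf P w * g (F w))"
proof -
  have "(\<Sum>u\<in>set_pmf (map_pmf F P). pmf (map_pmf F P) u * g u) = measure_pmf.expectation (map_pmf F P) g"
    using assms by (subst integral_measure_pmf_real[where A = "set_pmf (map_pmf F P)"]) (auto simp: mult.commute)
  also have "\<dots> = measure_pmf.expectation P (\<lambda>w. g (F w))" by simp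
  also have "\<dots> = (\<Sum>w\<in>set_pmf P. pmf P w * g (F w))"
    using assms by (subst integral_measure_pmf_real[where A = "set_pmf P"]) (auto simp: mult.commute)
  finally show ?thesis .
qed

lemma entropy_pmf_eq_sum_support:
  "finite (set_pmf P) \<Longrightarrow>
    entropy_pmf P F = - (\<Sum>w\<in>set_pmf P. pmf P w * log 2 (pmf (map_pmf F P) (F w)))"
  unfolding entropy_pmf_def by (subst sum_set_map_pmf) auto

lemma pmf_map_pmf_pos: "w \<in> set_pmf P \<Longrightarrow> 0 < pmf (map_pmf F P) (F w)"
  by (simp add: pmf_positive)

lemma mutinf_eq_entropy_pmf_minus_cond:
  assumes "finite (set_pmf P)"
  shows "mutinf P A B = entropy_pmf P A - cond_entropy_pmf P A B"
proof -
  have "mutinf P A B = (\<Sum>w\<in>set_pmf P. pmf P w * log 2 (pmf (map_pmf (\<lambda>w. (A w, B w)) P) (A w, B w) /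
      (pmf (map_pmf A P) (A w) * pmf (map_pmf B P) (B w))))"
    unfolding mutinf_def using sum_set_map_pmf[OF assms, of "\<lambda>w. (A w, B w)"
      "\<lambda>(a, b). log 2 (pmf (map_pmf (\<lambda>w. (A w, B w)) P) (a, b) / (pmf (map_pmf A P) a * pmf (map_pmf B P) b))"]
    by (simp add: case_prod_beta')
  also have "\<dots> = (\<Sum>w\<in>set_pmf P. pmf P w * log 2 (pmf (map_pmf (\<lambda>w. (A w, B w)) P) (A w, B w))
      - pmf P w * log 2 (pmf (map_pmf A P) (A w)) - pmf P w * log 2 (pmf (map_pmf B P) (B w)))"
    (is "(\<Sum>w\<in>_. ?f w) = (\<Sum>w\<in>_. ?g w)")
  proof (intro sum.cong refl)
    fix w assume "w \<in> set_pmf P"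
    then show "?f w = ?g w"
      using pmf_map_pmf_pos[of w P A] pmf_map_pmf_pos[of w P B] pmf_map_pmf_pos[of w P "\<lambda>w. (A w, B w)"]
      by (simp add: log_divide log_mult algebra_simps)
  qed
  also have "\<dots> = entropy_pmf P A - cond_entropy_pmf P A B"
    unfolding cond_entropy_pmf_def entropy_pmf_eq_sum_support[OF assms] sum_subtractf by simp
  finally show ?thesis .
qed

lemma mutinf_nonneg:
  assumes "finite (set_pmf P)"
  shows "0 \<le> mutinf P A B"
proof -
  interpret information_space "pmf_support_measure P" 2
    by (rule information_space_pmf_support_measure)
  show ?thesis
    using mutual_information_nonneg_simple assms
    by (simp add: mutinf_eq_mutual_information simple_function_def)
qed

lemma cond_entropy_pmf_le_entropy_pmf:
  "finite (set_pmf P) \<Longrightarrow> cond_entropy_pmf P A B \<le> entropy_pmf P A"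
  using mutinf_nonneg[of P A B] mutinf_eq_entropy_pmf_minus_cond[of P A B] by simp

lemma entropy_pmf_le_log_card:
  assumes "finite (set_pmf P)"
  shows "entropy_pmf P F \<le> log 2 (card (F ` set_pmf P))"
proof -
  interpret information_space "pmf_support_measure P" 2
    by (rule information_space_pmf_support_measure)
  show ?thesis
    using entropy_le_card[OF simple_distributed_pmf_support_measure[OF assms, of F]]
    by (simp add: entropy_pmf_eq_entropy[OF assms])
qed

lemma entropy_pmf_inj:
  assumes "finite (set_pmf P)" and "inj_on f (F ` set_pmf P)"
  shows "entropy_pmf P (\<lambda>w. f (F w)) = entropy_pmf P F"
proof -
  interpret information_space "pmf_support_measure P" 2
    by (rule information_space_pmf_support_measure)
  show ?thesis
    using entropy_of_inj[of F f] assms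
    by (simp add: entropy_pmf_eq_entropy simple_function_def comp_def image_image)
qed

lemma cond_entropy_pmf_inj:
  assumes "finite (set_pmf P)" and "inj_on f (A ` set_pmf P)"
  shows "cond_entropy_pmf P (\<lambda>w. f (A w)) B = cond_entropy_pmf P A B"
proof -
  have "inj_on (\<lambda>(a, b). (f a, b)) ((\<lambda>w. (A w, B w)) ` set_pmf P)"
    using assms(2) by (auto simp: inj_on_def)
  then show ?thesis
    using entropy_pmf_inj[OF assms(1), of "\<lambda>(a, b). (f a, b)" "\<lambda>w. (A w, B w)"]
    by (simp add: cond_entropy_pmf_def)
qed

lemma cond_entropy_pmf_const: "finite (set_pmf P) \<Longrightarrow> cond_entropy_pmf P (\<lambda>_. c) B = 0"
  using entropy_pmf_inj[of P "Pair c" B] by (simp add: cond_entropy_pmf_def inj_on_def)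

lemma cond_entropy_pmf_chain:
  assumes "finite (set_pmf P)"
  shows "cond_entropy_pmf P (\<lambda>w. (A w, B w)) C =
    cond_entropy_pmf P A (\<lambda>w. (B w, C w)) + cond_entropy_pmf P B C"
  using entropy_pmf_inj[OF assms, of "\<lambda>((a, b), c). (a, b, c)" "\<lambda>w. ((A w, B w), C w)"]
  by (simp add: cond_entropy_pmf_def inj_on_def)

text \<open>This is the nonnegativity of the conditional mutual information \<open>I(A; B | C)\<close>.\<close>
lemma entropy_pmf_submodular:
  assumes "finite (set_pmf P)"
  shows "entropy_pmf P (\<lambda>w. (A w, B w, C w)) + entropy_pmf P C \<le>
    entropy_pmf P (\<lambda>w. (A w, C w)) + entropy_pmf P (\<lambda>w. (B w, C w))"
proof -
  interpret information_space "pmf_support_measure P" 2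
    by (rule information_space_pmf_support_measure)
  define pc where "pc = pmf (map_pmf C P)"
  define pbc where "pbc = pmf (map_pmf (\<lambda>w. (B w, C w)) P)"
  define pac where "pac = pmf (map_pmf (\<lambda>w. (A w, C w)) P)"
  define pabc where "pabc = pmf (map_pmf (\<lambda>w. (A w, B w, C w)) P)"
  note sd = simple_distributed_pmf_support_measure[OF assms]
  have "0 \<le> conditional_mutual_information 2 (count_space (A ` set_pmf P))
      (count_space (B ` set_pmf P)) (count_space (C ` set_pmf P)) A B C"
    using conditional_mutual_information_nonneg assms by (simp add: simple_function_def)
  also have "\<dots> = (\<Sum>(a, b, c)\<in>(\<lambda>w. (A w, B w, C w)) ` set_pmf P.
      pabc (a, b, c) * log 2 (pabc (a, b, c) / (pac (a, c) * (pbc (b, c) / pc c))))"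
    using conditional_mutual_information_eq[OF sd[of C] sd[of "\<lambda>w. (B w, C w)"]
        sd[of "\<lambda>w. (A w, C w)"] sd[of "\<lambda>w. (A w, B w, C w)"]]
    by (simp add: pc_def pbc_def pac_def pabc_def)
  also have "\<dots> = (\<Sum>w\<in>set_pmf P.
      pmf P w * log 2 (pabc (A w, B w, C w) / (pac (A w, C w) * (pbc (B w, C w) / pc (C w)))))"
    using sum_set_map_pmf[OF assms, of "\<lambda>w. (A w, B w, C w)"
      "\<lambda>(a, b, c). log 2 (pabc (a, b, c) / (pac (a, c) * (pbc (b, c) / pc c)))"]
    by (simp add: pabc_def case_prod_beta')
  also have "\<dots> = (\<Sum>w\<in>set_pmf P. pmf P w * log 2 (pabc (A w, B w, C w))
      - pmf P w * log 2 (pac (A w, C w)) - pmf P w * log 2 (pbc (B w, C w)) + pmf P w * log 2 (pc (C w)))"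
    (is "(\<Sum>w\<in>_. ?f w) = (\<Sum>w\<in>_. ?g w)")
  proof (intro sum.cong refl)
    fix w assume "w \<in> set_pmf P"
    then show "?f w = ?g w"
      using pmf_map_pmf_pos[of w P C] pmf_map_pmf_pos[of w P "\<lambda>w. (B w, C w)"]
        pmf_map_pmf_pos[of w P "\<lambda>w. (A w, C w)"] pmf_map_pmf_pos[of w P "\<lambda>w. (A w, B w, C w)"]
      by (simp add: pc_def pbc_def pac_def pabc_def log_divide log_mult algebra_simps)
  qed
  also have "\<dots> = entropy_pmf P (\<lambda>w. (A w, C w)) + entropy_pmf P (\<lambda>w. (B w, C w))
      - entropy_pmf P (\<lambda>w. (A w, B w, C w)) - entropy_pmf P C"
    unfolding entropy_pmf_eq_sum_support[OF assms] sum_subtractf sum.distrib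
    by (simp add: pc_def pbc_def pac_def pabc_def)
  finally show ?thesis by simp
qed

lemma cond_entropy_pmf_le_comp:
  assumes "finite (set_pmf P)"
  shows "cond_entropy_pmf P A Y \<le> cond_entropy_pmf P A (\<lambda>w. g (Y w))"
proof -
  have "entropy_pmf P (\<lambda>w. (A w, Y w, g (Y w))) = entropy_pmf P (\<lambda>w. (A w, Y w))"
    using entropy_pmf_inj[OF assms, of "\<lambda>(a, y). (a, y, g y)" "\<lambda>w. (A w, Y w)"]
    by (simp add: inj_on_def)
  moreover have "entropy_pmf P (\<lambda>w. (Y w, g (Y w))) = entropy_pmf P Y"
    using entropy_pmf_inj[OF assms, of "\<lambda>y. (y, g y)" Y] by (simp add: inj_on_def)
  ultimately show ?thesis
    using entropy_pmf_submodular[OF assms, of A Y "\<lambda>w. g (Y w)"]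
    by (simp add: cond_entropy_pmf_def)
qed

section \<open>Continuity of entropy\<close>

lemma mult_ln_nonpos: "0 \<le> x \<Longrightarrow> x \<le> 1 \<Longrightarrow> x * ln x \<le> (0::real)"
  by (cases "x = 0") (auto simp: mult_nonneg_nonpos)

lemma mult_ln_add_le:
  fixes a d :: real
  assumes "0 \<le> a" "0 \<le> d"
  shows "a * ln a + d * ln d \<le> (a + d) * ln (a + d)"
proof -
  have "x * ln x \<le> x * ln (a + d)" if "0 \<le> x" "x \<le> a + d" for x
    using that by (cases "x = 0") (auto intro: mult_left_mono)
  from this[of a] this[of d] show ?thesis
    using assms by (simp add: distrib_right)
qed

lemma mult_ln_add_minus_le:
  fixes a d :: real
  assumes "0 \<le> a" "0 \<le> d" "a + d \<le> 1"
  shows "(a + d) * ln (a + d) - a * ln a \<le> d"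
proof (cases "a = 0")
  case True
  then show ?thesis using mult_ln_nonpos[of d] assms by simp
next
  case False
  then have a: "a > 0" using assms by simp
  have "a * ln ((a + d) / a) \<le> a * ((a + d) / a - 1)"
    using a assms by (intro mult_left_mono ln_le_minus_one) auto
  also have "\<dots> = d" using a by (simp add: field_simps)
  finally have "a * (ln (a + d) - ln a) \<le> d"
    using a assms by (simp add: ln_div)
  moreover have "d * ln (a + d) \<le> 0"
    using a assms by (simp add: mult_nonneg_nonpos)
  ultimately show ?thesis by (simp add: algebra_simps)
qed

lemma abs_mult_ln_diff_le:
  fixes a b :: real
  assumes "0 \<le> a" "0 \<le> b" "a \<le> 1" "b \<le> 1"
  shows "\<bar>a * ln a - b * ln b\<bar> \<le> - (\<bar>a - b\<bar> * ln \<bar>a - b\<bar>) + \<bar>a - b\<bar>"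
proof -
  have *: "\<bar>(x + d) * ln (x + d) - x * ln x\<bar> \<le> - (d * ln d) + d"
    if "0 \<le> x" "0 \<le> d" "x + d \<le> 1" for x d :: real
    using mult_ln_add_le[OF that(1,2)] mult_ln_add_minus_le[OF that] mult_ln_nonpos[of d] that
    unfolding abs_le_iff by linarith
  show ?thesis
  proof (cases "a \<le> b")
    case True
    then show ?thesis using *[of a "b - a"] assms by (simp add: abs_minus_commute)
  next
    case False
    then show ?thesis using *[of b "a - b"] assms by simp
  qed
qed

lemma neg_mult_ln_mono:
  fixes x y :: real
  assumes "0 \<le> x" "x \<le> y" "y \<le> exp (-1)"
  shows "- (x * ln x) \<le> - (y * ln y)"
proof (cases "x = 0")
  case True
  have "y \<le> 1" using assms(3) by (smt (verit) exp_le_one_iff)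
  then show ?thesis using True mult_ln_nonpos[of y] assms by simp
next
  case False
  then have x: "x > 0" and y: "y > 0" using assms by auto
  have "x * ln (y / x) \<le> x * (y / x - 1)"
    using x y by (intro mult_left_mono ln_le_minus_one) auto
  also have "\<dots> = y - x" using x by (simp add: field_simps)
  finally have "x * (ln y - ln x) \<le> y - x"
    using x y by (simp add: ln_div)
  moreover have "ln y \<le> -1"
    using y assms(3) by (metis ln_exp ln_le_cancel_iff exp_gt_zero)
  then have "(y - x) * (ln y + 1) \<le> 0"
    using assms by (intro mult_nonneg_nonpos) auto
  ultimately show ?thesis by (simp add: algebra_simps)
qed

text \<open>Split the terms at the threshold \<open>\<tau> = \<epsilon> / K\<close>: a term with \<open>d u \<ge> \<tau>\<close> is at most
  \<open>d u * ln (1 / \<tau>)\<close>, and each of the at most \<open>K\<close> remaining ones at most \<open>- \<tau> * ln \<tau>\<close>.\<close>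
lemma sum_neg_mult_ln_le:
  fixes d :: "'a \<Rightarrow> real"
  assumes "finite U" "real (card U) \<le> K" "1 \<le> K" "\<And>u. u \<in> U \<Longrightarrow> 0 \<le> d u"
    and "sum d U \<le> \<epsilon>" "0 < \<epsilon>" "\<epsilon> \<le> 1/4"
  shows "(\<Sum>u\<in>U. - (d u * ln (d u))) \<le> 2 * \<epsilon> * ln (K / \<epsilon>)"
proof -
  define \<tau> where "\<tau> = \<epsilon> / K"
  have \<tau>: "0 < \<tau>" "\<tau> \<le> \<epsilon>" using assms by (auto simp: \<tau>_def field_simps)
  have "exp (1::real) \<le> 4" using exp_le by simp
  then have "1/4 \<le> exp (-1::real)" by (simp add: exp_minus field_simps)
  then have "\<tau> \<le> exp (-1)" using \<tau> assms by linarith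
  have ln_inv_\<tau>: "0 \<le> ln (1 / \<tau>)" and neg_\<tau>: "0 \<le> - (\<tau> * ln \<tau>)"
    using \<tau> assms mult_ln_nonpos[of \<tau>] by auto
  have "- (d u * ln (d u)) \<le> d u * ln (1 / \<tau>) + - (\<tau> * ln \<tau>)" if u: "u \<in> U" for u
  proof (cases "\<tau> \<le> d u")
    case True
    then have "- (d u * ln (d u)) \<le> d u * ln (1 / \<tau>)"
      using assms(4)[OF u] \<tau> by (simp add: ln_div mult_left_mono)
    then show ?thesis using neg_\<tau> by linarith
  next
    case False
    then show ?thesis
      using neg_mult_ln_mono[of "d u" \<tau>] \<open>\<tau> \<le> exp (-1)\<close>
        mult_nonneg_nonneg[OF assms(4)[OF u] ln_inv_\<tau>] assms(4)[OF u] by linarith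
  qed
  then have "(\<Sum>u\<in>U. - (d u * ln (d u))) \<le> (\<Sum>u\<in>U. d u * ln (1 / \<tau>) + - (\<tau> * ln \<tau>))"
    by (rule sum_mono)
  also have "\<dots> = sum d U * ln (1 / \<tau>) + real (card U) * (- (\<tau> * ln \<tau>))"
    by (simp add: sum_subtractf sum_distrib_right)
  also have "\<dots> \<le> \<epsilon> * ln (1 / \<tau>) + K * (- (\<tau> * ln \<tau>))"
    using assms ln_inv_\<tau> neg_\<tau> by (intro add_mono mult_right_mono) auto
  also have "\<dots> = 2 * \<epsilon> * ln (K / \<epsilon>)"
    using assms \<tau> by (simp add: \<tau>_def ln_div field_simps)
  finally show ?thesis .
qed

lemma pmf_map_pmf_eq_sum:
  assumes "finite S" "set_pmf P \<subseteq> S"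
  shows "pmf (map_pmf F P) u = (\<Sum>w\<in>{w\<in>S. F w = u}. pmf P w)"
proof -
  have "pmf (map_pmf F P) u = measure_pmf.prob P (F -` {u} \<inter> set_pmf P)"
    by (simp add: pmf_map measure_Int_set_pmf)
  also have "F -` {u} \<inter> set_pmf P = (F -` {u} \<inter> S) \<inter> set_pmf P" using assms by auto
  also have "measure_pmf.prob P \<dots> = measure_pmf.prob P (F -` {u} \<inter> S)"
    by (simp add: measure_Int_set_pmf)
  also have "F -` {u} \<inter> S = {w\<in>S. F w = u}" by auto
  finally show ?thesis using assms by (simp add: measure_measure_pmf_finite)
qed

lemma entropy_pmf_eq_sum_superset:
  assumes "finite U" "F ` set_pmf P \<subseteq> U"
  shows "entropy_pmf P F = - (\<Sum>u\<in>U. pmf (map_pmf F P) u * log 2 (pmf (map_pmf F P) u))"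
  unfolding entropy_pmf_def
proof (intro arg_cong[where f = uminus] sum.mono_neutral_left)
  show "\<forall>u\<in>U - set_pmf (map_pmf F P). pmf (map_pmf F P) u * log 2 (pmf (map_pmf F P) u) = 0"
    by (auto simp: set_pmf_eq)
qed (use assms in auto)

lemma sum_abs_diff_pmf_map_le_l1dist:
  assumes S: "finite (set_pmf P \<union> set_pmf Q)"
    and U: "finite U" "F ` (set_pmf P \<union> set_pmf Q) \<subseteq> U"
  shows "(\<Sum>u\<in>U. \<bar>pmf (map_pmf F P) u - pmf (map_pmf F Q) u\<bar>) \<le> l1dist P Q"
proof -
  let ?S = "set_pmf P \<union> set_pmf Q"
  have "(\<Sum>u\<in>U. \<bar>pmf (map_pmf F P) u - pmf (map_pmf F Q) u\<bar>) =
        (\<Sum>u\<in>U. \<bar>\<Sum>w\<in>{w\<in>?S. F w = u}. pmf P w - pmf Q w\<bar>)"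
    by (simp add: pmf_map_pmf_eq_sum[OF S] sum_subtractf)
  also have "\<dots> \<le> (\<Sum>u\<in>U. \<Sum>w\<in>{w\<in>?S. F w = u}. \<bar>pmf P w - pmf Q w\<bar>)"
    by (intro sum_mono sum_abs)
  also have "\<dots> = (\<Sum>w\<in>?S. \<bar>pmf P w - pmf Q w\<bar>)"
    by (rule sum.group) (use S U in auto)
  finally show ?thesis by (simp add: l1dist_def)
qed


lemma entropy_pmf_continuity:
  assumes fin: "finite (set_pmf P)" "finite (set_pmf Q)"
    and K: "real (card (F ` (set_pmf P \<union> set_pmf Q))) \<le> K" "1 \<le> K"
    and \<epsilon>: "l1dist P Q \<le> \<epsilon>" "0 < \<epsilon>" "\<epsilon> \<le> 1/4"
  shows "\<bar>entropy_pmf P F - entropy_pmf Q F\<bar> \<le> 2 * \<epsilon> * log 2 (K / \<epsilon>) + 2 * \<epsilon>"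
proof -
  define U where "U = F ` (set_pmf P \<union> set_pmf Q)"
  define p where "p = pmf (map_pmf F P)"
  define q where "q = pmf (map_pmf F Q)"
  define d where "d u = \<bar>p u - q u\<bar>" for u
  have U: "finite U" using fin by (simp add: U_def)
  have "entropy_pmf P F = - (\<Sum>u\<in>U. p u * ln (p u)) / ln 2"
    using entropy_pmf_eq_sum_superset[OF U, of F P] by (auto simp: U_def p_def log_def sum_divide_distrib)
  moreover have "entropy_pmf Q F = - (\<Sum>u\<in>U. q u * ln (q u)) / ln 2"
    using entropy_pmf_eq_sum_superset[OF U, of F Q] by (auto simp: U_def q_def log_def sum_divide_distrib)
  ultimately have "entropy_pmf P F - entropy_pmf Q F = (\<Sum>u\<in>U. q u * ln (q u) - p u * ln (p u)) / ln 2"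
    by (simp add: diff_divide_distrib sum_subtractf)
  also have "\<bar>\<dots>\<bar> = \<bar>\<Sum>u\<in>U. p u * ln (p u) - q u * ln (q u)\<bar> / ln 2"
    by (simp add: sum_subtractf abs_minus_commute)
  also have "\<dots> \<le> (\<Sum>u\<in>U. \<bar>p u * ln (p u) - q u * ln (q u)\<bar>) / ln 2"
    by (intro divide_right_mono sum_abs) auto
  also have "\<dots> \<le> (\<Sum>u\<in>U. - (d u * ln (d u)) + d u) / ln 2"
    unfolding d_def p_def q_def
    by (intro divide_right_mono sum_mono abs_mult_ln_diff_le) (auto simp: pmf_le_1)
  also have "\<dots> \<le> (2 * \<epsilon> * ln (K / \<epsilon>) + \<epsilon>) / ln 2"
  proof -
    have "sum d U \<le> l1dist P Q" unfolding d_def p_def q_def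
      by (rule sum_abs_diff_pmf_map_le_l1dist) (use fin U in \<open>auto simp: U_def\<close>)
    then have "sum d U \<le> \<epsilon>" using \<epsilon> by linarith
    moreover have "(\<Sum>u\<in>U. - (d u * ln (d u))) \<le> 2 * \<epsilon> * ln (K / \<epsilon>)"
      using U K \<epsilon> \<open>sum d U \<le> \<epsilon>\<close> by (intro sum_neg_mult_ln_le) (auto simp: d_def U_def)
    ultimately have "(\<Sum>u\<in>U. - (d u * ln (d u)) + d u) \<le> 2 * \<epsilon> * ln (K / \<epsilon>) + \<epsilon>"
      unfolding sum.distrib by linarith
    then show ?thesis by (rule divide_right_mono) simp
  qed
  also have "\<dots> = 2 * \<epsilon> * log 2 (K / \<epsilon>) + \<epsilon> / ln 2"
    by (simp add: log_def add_divide_distrib)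
  also have "\<epsilon> / ln 2 \<le> 2 * \<epsilon>"
    using ln2_ge_two_thirds \<epsilon> by (simp add: field_simps)
  finally show ?thesis by simp
qed

lemma cond_entropy_pmf_continuity:
  assumes fin: "finite (set_pmf P)" "finite (set_pmf Q)"
    and K: "real (card ((\<lambda>w. (A w, B w)) ` (set_pmf P \<union> set_pmf Q))) \<le> K" "1 \<le> K"
    and \<epsilon>: "l1dist P Q \<le> \<epsilon>" "0 < \<epsilon>" "\<epsilon> \<le> 1/4"
  shows "\<bar>cond_entropy_pmf P A B - cond_entropy_pmf Q A B\<bar> \<le> 2 * (2 * \<epsilon> * log 2 (K / \<epsilon>) + 2 * \<epsilon>)"
proof -
  have "B ` (set_pmf P \<union> set_pmf Q) = snd ` (\<lambda>w. (A w, B w)) ` (set_pmf P \<union> set_pmf Q)"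
    by (simp add: image_image)
  then have "card (B ` (set_pmf P \<union> set_pmf Q)) \<le> card ((\<lambda>w. (A w, B w)) ` (set_pmf P \<union> set_pmf Q))"
    using fin by (simp add: card_image_le)
  then have "real (card (B ` (set_pmf P \<union> set_pmf Q))) \<le> K"
    using K(1) by (meson of_nat_le_iff order_trans)
  from entropy_pmf_continuity[OF fin this K(2) \<epsilon>] show ?thesis
    using entropy_pmf_continuity[OF fin K \<epsilon>]
    unfolding cond_entropy_pmf_def abs_le_iff by auto
qed

section \<open>Bhattacharyya parameter and conditional entropy\<close>

lemma binary_KL_uniform_le:
  fixes a c :: real
  assumes "0 \<le> a" "0 \<le> c" "0 < a + c"
  shows "a * ln (2 * a / (a + c)) + c * ln (2 * c / (a + c)) \<le> (a - c)\<^sup>2 / (a + c)"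
proof -
  have *: "x * ln (2 * x / (a + c)) \<le> x * (2 * x / (a + c) - 1)" if "0 \<le> x" for x
    using that assms by (cases "x = 0") (auto intro!: mult_left_mono ln_le_minus_one)
  have "a * (2 * a / (a + c) - 1) + c * (2 * c / (a + c) - 1) = (2*a*a + 2*c*c - (a + c) * (a + c)) / (a + c)"
    using assms
    by (simp add: diff_divide_distrib right_diff_distrib add_divide_distrib mult.assoc mult.left_commute)
  also have "2*a*a + 2*c*c - (a + c) * (a + c) = (a - c)\<^sup>2"
    by (simp add: power2_eq_square algebra_simps)
  finally have "a * (2 * a / (a + c) - 1) + c * (2 * c / (a + c) - 1) = (a - c)\<^sup>2 / (a + c)" .
  then show ?thesis using *[of a] *[of c] assms by linarith
qed

lemma square_diff_div_sum_le:
  fixes a c :: real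
  assumes "0 \<le> a" "0 \<le> c" "0 < a + c"
  shows "(a - c)\<^sup>2 / (a + c) \<le> 2 * ((a + c) - 2 * sqrt (a * c))"
proof -
  define x y where "x = sqrt a" and "y = sqrt c"
  have a: "a = x\<^sup>2" and c: "c = y\<^sup>2" and xy: "sqrt (a * c) = x * y"
    using assms by (simp_all add: x_def y_def real_sqrt_mult)
  have "(a - c)\<^sup>2 = (x - y)\<^sup>2 * (x + y)\<^sup>2"
    unfolding a c by (simp add: power2_eq_square algebra_simps)
  also have "\<dots> \<le> (x - y)\<^sup>2 * (2 * (a + c))"
    using sum_squares_bound[of x y] unfolding a c
    by (intro mult_left_mono) (auto simp: power2_eq_square algebra_simps)
  also have "\<dots> = 2 * ((a + c) - 2 * (x * y)) * (a + c)"
    unfolding a c by (simp add: power2_eq_square algebra_simps)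
  finally show ?thesis using assms by (simp add: xy pos_divide_le_eq)
qed

text \<open>In nats, \<open>(a + c) ln 2\<close> minus the entropy term is a divergence from the uniform law; it is
  bounded by the \<open>\<chi>\<^sup>2\<close> distance and that by \<open>2 (\<surd>a - \<surd>c)\<^sup>2\<close>.  Finally \<open>2 / ln 2 \<le> 3\<close>.\<close>
lemma binary_entropy_ge_bhatt:
  fixes a c :: real
  assumes "0 \<le> a" "0 \<le> c" "0 < a + c"
  shows "(a + c) - 3 * ((a + c) - 2 * sqrt (a * c)) \<le>
    - (a * log 2 a) - c * log 2 c + (a + c) * log 2 (a + c)"
proof -
  define D where "D = (a + c) - 2 * sqrt (a * c)"
  have "0 \<le> D" using arith_geo_mean_sqrt[of a c] assms by (simp add: D_def)
  have "x * ln (2 * x / (a + c)) = x * ln 2 + x * ln x - x * ln (a + c)" if "0 \<le> x" for x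
    using that assms by (cases "x = 0") (simp_all add: ln_div ln_mult algebra_simps)
  from this[of a] this[of c] have "a * ln 2 + c * ln 2 - 2 * D \<le> - (a * ln a) - c * ln c + a * ln (a + c) + c * ln (a + c)"
    using binary_KL_uniform_le[OF assms] square_diff_div_sum_le[OF assms] assms
    unfolding D_def by linarith
  then have "(a + c) * ln 2 - 2 * D \<le> - (a * ln a) - c * ln c + (a + c) * ln (a + c)"
    by (simp add: distrib_right)
  then have "((a + c) * ln 2 - 2 * D) / ln 2 \<le> (- (a * ln a) - c * ln c + (a + c) * ln (a + c)) / ln 2"
    by (rule divide_right_mono) simp
  then have "(a + c) - 2 / ln 2 * D \<le> - (a * log 2 a) - c * log 2 c + (a + c) * log 2 (a + c)"
    by (simp add: log_def diff_divide_distrib add_divide_distrib)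
  moreover have "2 / ln 2 * D \<le> 3 * D"
    using ln2_ge_two_thirds \<open>0 \<le> D\<close> by (intro mult_right_mono) (auto simp: divide_le_eq)
  ultimately show ?thesis by (simp add: D_def)
qed

lemma pmf_map_pmf_eq_sum_bool:
  fixes B :: "'w \<Rightarrow> bool"
  assumes "finite (set_pmf P)"
  shows "pmf (map_pmf Y P) y =
    pmf (map_pmf (\<lambda>w. (B w, Y w)) P) (False, y) + pmf (map_pmf (\<lambda>w. (B w, Y w)) P) (True, y)"
proof -
  let ?S = "set_pmf P"
  have "{w\<in>?S. Y w = y} = {w\<in>?S. (B w, Y w) = (False, y)} \<union> {w\<in>?S. (B w, Y w) = (True, y)}"
    by auto
  moreover have "(\<Sum>w\<in>{w\<in>?S. (B w, Y w) = (False, y)} \<union> {w\<in>?S. (B w, Y w) = (True, y)}. pmf P w) =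
      (\<Sum>w\<in>{w\<in>?S. (B w, Y w) = (False, y)}. pmf P w) + (\<Sum>w\<in>{w\<in>?S. (B w, Y w) = (True, y)}. pmf P w)"
    using assms by (intro sum.union_disjoint) auto
  ultimately show ?thesis
    using assms by (simp add: pmf_map_pmf_eq_sum[of ?S])
qed

lemma bhatt_eq_sum:
  "bhatt P B Y = (\<Sum>y\<in>set_pmf (map_pmf Y P).
    2 * sqrt (pmf (map_pmf (\<lambda>w. (B w, Y w)) P) (False, y) * pmf (map_pmf (\<lambda>w. (B w, Y w)) P) (True, y)))"
  unfolding bhatt_def sum_distrib_left
proof (intro sum.cong refl)
  fix y assume "y \<in> set_pmf (map_pmf Y P)"
  then have "0 < pmf (map_pmf Y P) y" by (simp add: pmf_positive)
  then show "2 * (pmf (map_pmf Y P) y * sqrt (pmf (map_pmf (\<lambda>w. (B w, Y w)) P) (False, y) / pmf (map_pmf Y P) y *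
      (pmf (map_pmf (\<lambda>w. (B w, Y w)) P) (True, y) / pmf (map_pmf Y P) y))) =
    2 * sqrt (pmf (map_pmf (\<lambda>w. (B w, Y w)) P) (False, y) * pmf (map_pmf (\<lambda>w. (B w, Y w)) P) (True, y))"
    by (simp add: real_sqrt_divide real_sqrt_mult power2_eq_square[symmetric])
qed

lemma cond_entropy_pmf_bool_eq_sum:
  fixes B :: "'w \<Rightarrow> bool" and Y :: "'w \<Rightarrow> 'y"
  assumes "finite (set_pmf P)"
  defines "r \<equiv> pmf (map_pmf (\<lambda>w. (B w, Y w)) P)"
  shows "cond_entropy_pmf P B Y = (\<Sum>y\<in>set_pmf (map_pmf Y P).
    - (r (False, y) * log 2 (r (False, y))) - r (True, y) * log 2 (r (True, y))
    + (r (False, y) + r (True, y)) * log 2 (r (False, y) + r (True, y)))"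
proof -
  let ?Ys = "set_pmf (map_pmf Y P)"
  have "entropy_pmf P (\<lambda>w. (B w, Y w)) = - (\<Sum>u\<in>UNIV \<times> ?Ys. r u * log 2 (r u))"
    unfolding r_def using assms by (intro entropy_pmf_eq_sum_superset) auto
  also have "(\<Sum>u\<in>UNIV \<times> ?Ys. r u * log 2 (r u)) = (\<Sum>b\<in>UNIV. \<Sum>y\<in>?Ys. r (b, y) * log 2 (r (b, y)))"
    by (simp add: sum.cartesian_product)
  also have "\<dots> = (\<Sum>y\<in>?Ys. r (False, y) * log 2 (r (False, y)) + r (True, y) * log 2 (r (True, y)))"
    by (simp add: UNIV_bool sum.distrib)
  finally have "entropy_pmf P (\<lambda>w. (B w, Y w)) =
      - (\<Sum>y\<in>?Ys. r (False, y) * log 2 (r (False, y)) + r (True, y) * log 2 (r (True, y)))" .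
  moreover have "entropy_pmf P Y =
      - (\<Sum>y\<in>?Ys. (r (False, y) + r (True, y)) * log 2 (r (False, y) + r (True, y)))"
    unfolding entropy_pmf_def r_def pmf_map_pmf_eq_sum_bool[OF assms(1), of Y _ B] ..
  ultimately show ?thesis
    unfolding cond_entropy_pmf_def by (simp add: sum.distrib sum_subtractf sum_negf)
qed

lemma cond_entropy_pmf_ge_bhatt:
  fixes B :: "'w \<Rightarrow> bool"
  assumes "finite (set_pmf P)"
  shows "1 - 3 * (1 - bhatt P B Y) \<le> cond_entropy_pmf P B Y"
proof -
  let ?Ys = "set_pmf (map_pmf Y P)"
  define r where "r = pmf (map_pmf (\<lambda>w. (B w, Y w)) P)"
  define s where "s y = r (False, y) + r (True, y)" for y
  define t where "t y = 2 * sqrt (r (False, y) * r (True, y))" for y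
  have s: "s y = pmf (map_pmf Y P) y" for y
    unfolding s_def r_def by (rule pmf_map_pmf_eq_sum_bool[OF assms, symmetric])
  have "sum s ?Ys = 1"
    unfolding s using assms by (intro sum_pmf_eq_1) auto
  moreover have "sum t ?Ys = bhatt P B Y"
    by (simp add: bhatt_eq_sum t_def r_def)
  ultimately have "1 - 3 * (1 - bhatt P B Y) = (\<Sum>y\<in>?Ys. s y - 3 * (s y - t y))"
    by (simp only: sum_subtractf sum_distrib_left[symmetric])
  also have "\<dots> \<le> (\<Sum>y\<in>?Ys. - (r (False, y) * log 2 (r (False, y))) - r (True, y) * log 2 (r (True, y))
      + s y * log 2 (s y))"
  proof (intro sum_mono)
    fix y assume "y \<in> ?Ys"
    then have "0 < s y" by (simp add: s pmf_positive)
    then show "s y - 3 * (s y - t y) \<le> - (r (False, y) * log 2 (r (False, y))) - r (True, y) * log 2 (r (True, y))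
        + s y * log 2 (s y)"
      unfolding s_def t_def by (intro binary_entropy_ge_bhatt) (auto simp: r_def)
  qed
  also have "\<dots> = cond_entropy_pmf P B Y"
    by (simp add: cond_entropy_pmf_bool_eq_sum[OF assms] s_def r_def)
  finally show ?thesis .
qed

section \<open>Entropy of the polarized coordinates\<close>

lemma entropy_pmf_restrict_le_card:
  fixes F :: "'w \<Rightarrow> 'i \<Rightarrow> bool"
  assumes "finite (set_pmf P)" "finite S"
  shows "entropy_pmf P (\<lambda>w. restrict (F w) S) \<le> card S"
proof -
  have "(\<lambda>w. restrict (F w) S) ` set_pmf P \<subseteq> PiE S (\<lambda>_. UNIV)" by auto
  then have "card ((\<lambda>w. restrict (F w) S) ` set_pmf P) \<le> 2 ^ card S"
    using card_mono[of "PiE S (\<lambda>_. UNIV :: bool set)"] assms by (simp add: finite_PiE card_PiE)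
  moreover have "0 < card ((\<lambda>w. restrict (F w) S) ` set_pmf P)"
    using assms set_pmf_not_empty by (auto simp: card_gt_0_iff)
  ultimately have "log 2 (card ((\<lambda>w. restrict (F w) S) ` set_pmf P)) \<le> log 2 (2 ^ card S)"
    by (subst log_le_cancel_iff) (auto simp flip: of_nat_le_iff)
  then show ?thesis
    using entropy_pmf_le_log_card[OF assms(1), of "\<lambda>w. restrict (F w) S"] by (simp add: log_nat_power)
qed

lemma mutinf_restrict_le:
  fixes F :: "'w \<Rightarrow> 'i \<Rightarrow> bool"
  assumes fin: "finite (set_pmf P)" "finite I" and "A \<subseteq> I"
  shows "mutinf P (\<lambda>w. restrict (F w) (I - A)) (\<lambda>w. (restrict (F w) A, Z w)) \<le>
    card I - cond_entropy_pmf P (\<lambda>w. restrict (F w) I) Z"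
proof -
  let ?R = "\<lambda>S w. restrict (F w) S"
  have "inj_on (\<lambda>h. (restrict h (I - A), restrict h A)) (extensional I)"
    by (auto simp: inj_on_def extensional_def restrict_def fun_eq_iff) metis
  then have inj: "inj_on (\<lambda>h. (restrict h (I - A), restrict h A)) (?R I ` set_pmf P)"
    by (rule inj_on_subset) auto
  have "I \<inter> (I - A) = I - A" "I \<inter> A = A" using \<open>A \<subseteq> I\<close> by auto
  then have "(\<lambda>w. (restrict (?R I w) (I - A), restrict (?R I w) A)) = (\<lambda>w. (?R (I - A) w, ?R A w))"
    by simp
  then have "cond_entropy_pmf P (\<lambda>w. (?R (I - A) w, ?R A w)) Z = cond_entropy_pmf P (?R I) Z"
    using cond_entropy_pmf_inj[OF fin(1) inj, of Z] by simp
  then have "mutinf P (?R (I - A)) (\<lambda>w. (?R A w, Z w)) =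
      entropy_pmf P (?R (I - A)) + cond_entropy_pmf P (?R A) Z - cond_entropy_pmf P (?R I) Z"
    by (simp add: mutinf_eq_entropy_pmf_minus_cond[OF fin(1)] cond_entropy_pmf_chain[OF fin(1)])
  moreover have "entropy_pmf P (?R (I - A)) \<le> card (I - A)" "entropy_pmf P (?R A) \<le> card A"
    using fin \<open>A \<subseteq> I\<close> entropy_pmf_restrict_le_card finite_subset by blast+
  moreover have "card (I - A) + card A = card I"
    using fin(2) \<open>A \<subseteq> I\<close> by (metis card_Diff_subset card_mono finite_subset le_add_diff_inverse2)
  then have "real (card (I - A)) + card A = card I" by (metis of_nat_add)
  ultimately show ?thesis
    using cond_entropy_pmf_le_entropy_pmf[OF fin(1), of "?R A" Z] by linarith
qed

lemma cond_entropy_pmf_restrict_ge: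
  fixes T :: "'w \<Rightarrow> bool list" and Z :: "'w \<Rightarrow> 'z"
  assumes fin: "finite (set_pmf P)" "finite S" and "0 \<notin> S"
    and bhatt: "\<And>i. i \<in> S \<Longrightarrow>
      1 - \<delta> \<le> bhatt P (\<lambda>w. T w ! (i - 1)) (\<lambda>w. (take (i - 1) (T w), Z w))"
  shows "real (card S) * (1 - 3 * \<delta>) \<le> cond_entropy_pmf P (\<lambda>w. restrict (\<lambda>i. T w ! (i - 1)) S) Z"
  using fin(2) \<open>0 \<notin> S\<close> bhatt
proof (induction S rule: finite_linorder_max_induct)
  case empty
  then show ?case by (simp add: cond_entropy_pmf_const[OF fin(1)])
next
  case (insert m A)
  let ?R = "\<lambda>S w. restrict (\<lambda>i. T w ! (i - 1)) S"
  let ?Tm = "\<lambda>w. T w ! (m - 1)"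
  have "m \<notin> A" using insert.hyps(2) by auto
  have "inj_on (\<lambda>h. (h m, restrict h A)) (?R (insert m A) ` set_pmf P)"
    by (auto simp: inj_on_def restrict_def fun_eq_iff)
  moreover have "(\<lambda>w. (?R (insert m A) w m, restrict (?R (insert m A) w) A)) = (\<lambda>w. (?Tm w, ?R A w))"
    using \<open>m \<notin> A\<close> by (auto simp: fun_eq_iff)
  ultimately have "cond_entropy_pmf P (?R (insert m A)) Z = cond_entropy_pmf P (\<lambda>w. (?Tm w, ?R A w)) Z"
    using cond_entropy_pmf_inj[OF fin(1), of "\<lambda>h. (h m, restrict h A)" "?R (insert m A)" Z] by simp
  also have "\<dots> = cond_entropy_pmf P ?Tm (\<lambda>w. (?R A w, Z w)) + cond_entropy_pmf P (?R A) Z"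
    by (rule cond_entropy_pmf_chain[OF fin(1)])
  finally have split: "cond_entropy_pmf P (?R (insert m A)) Z =
      cond_entropy_pmf P ?Tm (\<lambda>w. (?R A w, Z w)) + cond_entropy_pmf P (?R A) Z" .
  \<comment> \<open>all indices of \<open>A\<close> lie below \<open>m\<close>, so \<open>T[A]\<close> is a function of the prefix \<open>T\<^sup>m\<^sup>-\<^sup>1\<close>\<close>
  have prefix: "(\<lambda>w. (?R A w, Z w)) =
      (\<lambda>w. (\<lambda>(t, z). (restrict (\<lambda>i. t ! (i - 1)) A, z)) (take (m - 1) (T w), Z w))"
  proof -
    have "i - 1 < m - 1" if "i \<in> A" for i
    proof -
      have "0 < i" "i < m" using that insert.hyps(2) insert.prems(1) by (auto intro: Nat.gr0I)
      then show ?thesis by linarith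
    qed
    then show ?thesis by (auto simp: fun_eq_iff restrict_def)
  qed
  have "cond_entropy_pmf P ?Tm (\<lambda>w. (take (m - 1) (T w), Z w)) \<le>
      cond_entropy_pmf P ?Tm (\<lambda>w. (?R A w, Z w))"
    unfolding prefix by (rule cond_entropy_pmf_le_comp[OF fin(1)])
  moreover have "1 - 3 * \<delta> \<le> cond_entropy_pmf P ?Tm (\<lambda>w. (take (m - 1) (T w), Z w))"
    using cond_entropy_pmf_ge_bhatt[OF fin(1), of ?Tm "\<lambda>w. (take (m - 1) (T w), Z w)"]
      insert.prems(2)[of m] by simp
  moreover have "real (card A) * (1 - 3 * \<delta>) \<le> cond_entropy_pmf P (?R A) Z"
    using insert.IH insert.prems by blast
  moreover have "card (insert m A) = card A + 1"
    using \<open>m \<notin> A\<close> insert.hyps(1) by simp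
  ultimately show ?case
    unfolding split by (simp add: algebra_simps)
qed

section \<open>The estimate for the polar transform\<close>

lemma iid_space:
  assumes "set_pmf p \<subseteq> UNIV \<times> Xs \<times> UNIV"
  shows "set_pmf (iid N p) \<subseteq> space N Xs"
proof
  fix w assume "w \<in> set_pmf (iid N p)"
  then obtain ws where ws: "ws \<in> set_pmf (replicate_pmf N p)"
    and w: "w = (map fst ws, map (fst \<circ> snd) ws, map (snd \<circ> snd) ws)"
    by (auto simp: iid_def)
  have "length ws = N" "set ws \<subseteq> set_pmf p" using ws by (auto simp: set_replicate_pmf)
  then show "w \<in> space N Xs" using w assms by (auto simp: space_def)
qed

lemma finite_space:
  assumes "finite Xs"
  shows "finite (space N Xs :: (bool list \<times> 'x list \<times> 'z::finite list) set)"
proof (rule finite_subset)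
  show "space N Xs \<subseteq> {v. set v \<subseteq> UNIV \<and> length v = N} \<times> {x. set x \<subseteq> Xs \<and> length x = N} \<times>
      {z :: 'z list. set z \<subseteq> UNIV \<and> length z = N}"
    by (auto simp: space_def)
qed (intro finite_cartesian_product finite_lists_length_eq; simp add: assms)

lemma card_image_space_le:
  fixes g :: "bool list \<times> 'z::finite list \<Rightarrow> 'b"
  assumes "S \<subseteq> space N Xs"
  shows "card ((\<lambda>w. g (fst w, snd (snd w))) ` S) \<le> 2 ^ N * CARD('z) ^ N"
proof -
  let ?L = "{v :: bool list. set v \<subseteq> UNIV \<and> length v = N} \<times> {z :: 'z list. set z \<subseteq> UNIV \<and> length z = N}"
  have fin: "finite ?L" by (intro finite_cartesian_product finite_lists_length_eq) simp_all
  have "(\<lambda>w. g (fst w, snd (snd w))) ` S \<subseteq> g ` ?L"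
    using assms by (auto simp: space_def)
  then have "card ((\<lambda>w. g (fst w, snd (snd w))) ` S) \<le> card (g ` ?L)"
    using fin by (intro card_mono) auto
  also have "\<dots> \<le> card ?L"
    using fin by (rule card_image_le)
  also have "\<dots> = 2 ^ N * CARD('z) ^ N"
    using card_lists_length_eq[of "UNIV :: bool set" N] card_lists_length_eq[of "UNIV :: 'z set" N]
    by (simp add: card_cartesian_product)
  finally show ?thesis .
qed

lemma mutinf_Tsub_le:
  fixes p :: "(bool \<times> 'x \<times> 'z::finite) pmf" and Q :: "(bool list \<times> 'x list \<times> 'z list) pmf"
  assumes Xs: "finite Xs" "set_pmf p \<subseteq> UNIV \<times> Xs \<times> UNIV" "set_pmf Q \<subseteq> space (2^n) Xs"
    and \<epsilon>: "l1dist (iid (2^n) p) Q \<le> \<epsilon>" "0 < \<epsilon>" "\<epsilon> \<le> 1/4" and "0 \<le> \<delta>"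
    and I: "I \<subseteq> Hset n \<delta> (iid (2^n) p)" and "A \<subseteq> I"
  shows "mutinf Q (Tsub n (I - A)) (\<lambda>w. (Tsub n A w, snd (snd w))) \<le>
    3 * \<delta> * 2^n + 2 * (2 * \<epsilon> * log 2 (real (2 ^ 2^n * CARD('z) ^ 2^n) / \<epsilon>) + 2 * \<epsilon>)"
proof -
  define P where "P = iid (2^n) p"
  define K :: real where "K = real (2 ^ 2^n * CARD('z) ^ 2^n)"
  let ?Z = "\<lambda>w :: bool list \<times> 'x list \<times> 'z list. snd (snd w)"
  let ?R = "\<lambda>S w. restrict (\<lambda>i. Tvec n w ! (i - 1)) S"
  have Tsub: "Tsub n S = ?R S" for S by (simp add: fun_eq_iff Tsub_def)
  have supp: "set_pmf P \<union> set_pmf Q \<subseteq> space (2^n) Xs"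
    using iid_space[OF Xs(2)] Xs(3) by (auto simp: P_def)
  then have fin: "finite (set_pmf P)" "finite (set_pmf Q)"
    using finite_space[OF Xs(1)] by (auto intro: finite_subset)
  have I_range: "I \<subseteq> {1..2^n}" using I by (auto simp: Hset_def)
  then have "finite I" by (rule finite_subset) simp
  have "0 \<notin> I" using I_range by auto
  have "card I \<le> 2^n" using card_mono[OF finite_atLeastAtMost I_range] by simp
  have "mutinf Q (Tsub n (I - A)) (\<lambda>w. (Tsub n A w, ?Z w)) \<le> card I - cond_entropy_pmf Q (?R I) ?Z"
    unfolding Tsub using fin(2) \<open>finite I\<close> \<open>A \<subseteq> I\<close> by (rule mutinf_restrict_le)
  moreover have "real (card I) * (1 - 3 * \<delta>) \<le> cond_entropy_pmf P (?R I) ?Z"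
    using fin(1) \<open>finite I\<close> \<open>0 \<notin> I\<close> by (rule cond_entropy_pmf_restrict_ge)
      (use I in \<open>auto simp: Hset_def P_def\<close>)
  moreover have cont: "\<bar>cond_entropy_pmf P (?R I) ?Z - cond_entropy_pmf Q (?R I) ?Z\<bar> \<le>
      2 * (2 * \<epsilon> * log 2 (K / \<epsilon>) + 2 * \<epsilon>)"
  proof (rule cond_entropy_pmf_continuity[OF fin])
    let ?g = "\<lambda>(v, z). (restrict (\<lambda>i. polar n v ! (i - 1)) I, z)"
    have "(\<lambda>w. (?R I w, ?Z w)) = (\<lambda>w. ?g (fst w, snd (snd w)))"
      by (simp add: fun_eq_iff Tvec_def)
    then have "card ((\<lambda>w. (?R I w, ?Z w)) ` (set_pmf P \<union> set_pmf Q)) \<le> 2 ^ 2^n * CARD('z) ^ 2^n"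
      using card_image_space_le[OF supp, of ?g] by (simp only:)
    then show "real (card ((\<lambda>w. (?R I w, ?Z w)) ` (set_pmf P \<union> set_pmf Q))) \<le> K"
      unfolding K_def by (simp only: of_nat_le_iff)
    have "(1::nat) \<le> 2 ^ 2^n * CARD('z) ^ 2^n" by (simp add: Suc_le_eq)
    then show "1 \<le> K" unfolding K_def by (metis of_nat_1 of_nat_le_iff)
  qed (use \<epsilon> in \<open>simp_all add: P_def\<close>)
  moreover have "real (card I) * (3 * \<delta>) \<le> 3 * \<delta> * 2^n"
    using \<open>card I \<le> 2^n\<close> \<open>0 \<le> \<delta>\<close> by (simp add: mult.commute mult_left_mono flip: of_nat_le_iff)
  moreover have "real (card I) * (1 - 3 * \<delta>) = card I - real (card I) * (3 * \<delta>)"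
    by (simp add: right_diff_distrib)
  ultimately show ?thesis
    using abs_le_D1[OF cont] unfolding K_def by linarith
qed

lemma polar_error_term_le:
  fixes \<beta> :: real and k n :: nat
  assumes "\<beta> \<le> 1" "0 < k"
  defines "X \<equiv> (2::real) ^ n" and "\<delta> \<equiv> 2 powr (- (((2::real) ^ n) powr \<beta>))"
  shows "3 * \<delta> * X + 2 * (2 * (X * \<delta>) * log 2 (real (2 ^ 2^n * k ^ 2^n) / (X * \<delta>)) + 2 * (X * \<delta>))
    \<le> (11 + 4 * log 2 (2 * real k)) * X ^ 3 * \<delta>"
proof -
  define L where "L = log 2 (2 * real k)"
  have "1 \<le> X" "0 < \<delta>" "0 \<le> L" using assms by (auto simp: X_def \<delta>_def L_def)
  have "log 2 (real (2 ^ 2^n * k ^ 2^n) / (X * \<delta>)) = X * L - n + X powr \<beta>"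
    using assms \<open>1 \<le> X\<close> \<open>0 < \<delta>\<close>
    by (simp add: L_def log_divide log_mult log_nat_power power_mult_distrib X_def \<delta>_def distrib_left)
  also have "X powr \<beta> \<le> X"
    using powr_mono[OF \<open>\<beta> \<le> 1\<close> \<open>1 \<le> X\<close>] \<open>1 \<le> X\<close> by simp
  finally have log_le: "log 2 (real (2 ^ 2^n * k ^ 2^n) / (X * \<delta>)) \<le> X * (L + 1)"
    by (simp add: algebra_simps)
  have "1 \<le> X * X" using mult_mono[OF \<open>1 \<le> X\<close> \<open>1 \<le> X\<close>] \<open>1 \<le> X\<close> by simp
  then have "X \<le> X ^ 3" "X * X \<le> X ^ 3"
    using \<open>1 \<le> X\<close> by (simp_all add: power3_eq_cube)
  then have "7 * (X * \<delta>) + 4 * (L + 1) * (X * X * \<delta>) \<le> 7 * (X ^ 3 * \<delta>) + 4 * (L + 1) * (X ^ 3 * \<delta>)"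
    using \<open>0 < \<delta>\<close> \<open>0 \<le> L\<close> by (intro add_mono mult_left_mono mult_right_mono) auto
  moreover have "2 * (X * \<delta>) * log 2 (real (2 ^ 2^n * k ^ 2^n) / (X * \<delta>)) \<le> 2 * (X * \<delta>) * (X * (L + 1))"
    using log_le \<open>1 \<le> X\<close> \<open>0 < \<delta>\<close> by (intro mult_left_mono) auto
  ultimately show ?thesis
    unfolding L_def[symmetric] by (simp add: algebra_simps)
qed

lemma polar_error_eventually_le:
  fixes \<beta> :: real
  assumes "0 < \<beta>"
  shows "\<exists>n0. \<forall>n\<ge>n0. real (2^n) * 2 powr (- (real (2^n) powr \<beta>)) \<le> 1/4"
proof -
  have "(\<lambda>n. real (2^n) * 2 powr (- (real (2^n) powr \<beta>))) \<longlonglongrightarrow> 0"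
    using assms by real_asymp
  then have "\<forall>\<^sub>F n in sequentially. real (2^n) * 2 powr (- (real (2^n) powr \<beta>)) < 1/4"
    by (rule order_tendstoD) simp
  then show ?thesis
    unfolding eventually_sequentially by (meson less_imp_le)
qed

lemma mutinf_Tsub_polar_le:
  fixes p :: "(bool \<times> 'x \<times> 'z::finite) pmf" and Q :: "(bool list \<times> 'x list \<times> 'z list) pmf"
    and \<beta> :: real and n :: nat
  defines "\<delta> \<equiv> 2 powr (- (real (2^n) powr \<beta>))"
  assumes "\<beta> \<le> 1" "real (2^n) * \<delta> \<le> 1/4"
    and "finite Xs" "set_pmf p \<subseteq> UNIV \<times> Xs \<times> UNIV" "set_pmf Q \<subseteq> space (2^n) Xs"
    and "l1dist (iid (2^n) p) Q \<le> real (2^n) * \<delta>"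
    and "I \<subseteq> Hset n \<delta> (iid (2^n) p)" "A \<subseteq> I"
  shows "mutinf Q (Tsub n (I - A)) (\<lambda>w. (Tsub n A w, snd (snd w))) \<le>
    (11 + 4 * log 2 (2 * real CARD('z))) * real (2^n) ^ 3 * \<delta>"
proof -
  have "0 < \<delta>" by (simp add: \<delta>_def)
  then have "mutinf Q (Tsub n (I - A)) (\<lambda>w. (Tsub n A w, snd (snd w))) \<le>
      3 * \<delta> * 2^n + 2 * (2 * (2^n * \<delta>) * log 2 (real (2 ^ 2^n * CARD('z) ^ 2^n) / (2^n * \<delta>))
        + 2 * (2^n * \<delta>))"
    using assms by (intro mutinf_Tsub_le) auto
  also have "\<dots> \<le> (11 + 4 * log 2 (2 * real CARD('z))) * real (2^n) ^ 3 * \<delta>"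
    using polar_error_term_le[OF \<open>\<beta> \<le> 1\<close>, of "CARD('z)" n] by (simp add: \<delta>_def)
  finally show ?thesis .
qed

theorem lemma1:
  shows "\<exists>C::real. \<forall>\<beta>::real. 0 < \<beta> \<and> \<beta> < 1/2 \<longrightarrow>
    (\<exists>n0::nat. \<forall>n \<ge> n0. \<forall>(Xs :: 'x set) (p :: (bool \<times> 'x \<times> 'z::finite) pmf)
        (Q :: (bool list \<times> 'x list \<times> 'z list) pmf) (Iset :: nat set) (Aset :: nat set).
      finite Xs \<and> set_pmf p \<subseteq> UNIV \<times> Xs \<times> UNIV \<and>
      set_pmf Q \<subseteq> space (2^n) Xs \<and>
      l1dist (iid (2^n) p) Q \<le> real (2^n) * 2 powr (- (real (2^n) powr \<beta>)) \<and>
      Iset \<subseteq> Hset n (2 powr (- (real (2^n) powr \<beta>))) (iid (2^n) p) \<and>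
      Aset \<subseteq> Iset \<longrightarrow>
      mutinf Q (Tsub n (Iset - Aset)) (\<lambda>w. (Tsub n Aset w, snd (snd w)))
        \<le> C * real (2^n) ^ 3 * 2 powr (- (real (2^n) powr \<beta>)))"
proof -
  have small: "\<exists>n0. \<forall>n\<ge>n0. real (2^n) * 2 powr (- (real (2^n) powr \<beta>)) \<le> 1/4 \<and> \<beta> \<le> 1"
    if "0 < \<beta> \<and> \<beta> < 1/2" for \<beta> :: real
    using polar_error_eventually_le that by fastforce
  show ?thesis
    by (intro exI[of _ "11 + 4 * log 2 (2 * real CARD('z))"] allI impI; drule small; elim exE)
      (blast intro: mutinf_Tsub_polar_le)
qed

end
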